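(* If $\mu$ and $\nu$ are fuzzy $\Gamma$-hyper bi-ideals of a fuzzy $\Gamma$-hypersemigroup $(M,\circ)$, then $\mu\cap\nu$ is also a fuzzy $\Gamma$-hyper bi-ideal of $(M,\circ)$.
   Context: $M,\Gamma$ are nonempty sets; a fuzzy subset of $M$ is a map $M\to[0,1]$. A fuzzy $\Gamma$-hyperoperation assigns to each $(a,\gamma,b)\in M\times\Gamma\times M$ a fuzzy subset $a\circ\gamma\circ b$. For $a\in M$ and fuzzy $\mu$: $(a\circ\gamma\circ\mu)(r)=\bigvee_{t\in M}((a\circ\gamma\circ t)(r)\wedge\mu(t))$ if $\mu\ne0$, else $0$; $(\mu\circ\gamma\circ a)(r)=\bigvee_{t\in M}(\mu(t)\wedge(t\circ\gamma\circ a)(r))$ if $\mu\ne0$, else $0$. For fuzzy $\mu,\nu$: $(\mu\circ\gamma\circ\nu)(t)=\bigvee_{p,q\in M}(\mu(p)\wedge(p\circ\gamma\circ q)(t)\wedge\nu(q))$. $(M,\circ)$ is a fuzzy $\Gamma$-hypersemigroup if $(a\circ\alpha\circ b)\circ\beta\circ c=a\circ\alpha\circ(b\circ\beta\circ c)$ for all $a,b,c\in M$, $\alpha,\beta\in\Gamma$. For fuzzy sets, $\mu\subseteq\nu$ means $\mu(x)\le\nu(x)$ for all $x$; $(\mu\cap\nu)(x)=\min(\mu(x),\nu(x))$. A fuzzy sub $\Gamma$-hypersemigroup is a fuzzy subset $\mu$ with $\mu\circ\gamma\circ\mu\subseteq\mu$ for all $\gamma\in\Gamma$. A fuzzy $\Gamma$-hyper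 bi-ideal is a fuzzy sub $\Gamma$-hypersemigroup $\mu$ with $(\mu\circ\alpha\circ y)\circ\beta\circ\mu\subseteq\mu$ for all $y\in M$, $\alpha,\beta\in\Gamma$. *)

theory Defs
  imports Complex_Main
begin

type_synonym 'm fuzzy = "'m \<Rightarrow> real"

definition fuzzy_set :: "'m fuzzy \<Rightarrow> bool" where
  "fuzzy_set \<mu> \<longleftrightarrow> (\<forall>x. 0 \<le> \<mu> x \<and> \<mu> x \<le> 1)"

text \<open>A fuzzy Gamma-hyperoperation: each (a,gamma,b) gives a fuzzy subset of M.
  M and Gamma are the (nonempty) types 'm and 'g.\<close>
definition fuzzy_hyperop :: "('m \<Rightarrow> 'g \<Rightarrow> 'm \<Rightarrow> 'm fuzzy) \<Rightarrow> bool" where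
  "fuzzy_hyperop op \<longleftrightarrow> (\<forall>a g b. fuzzy_set (op a g b))"

definition elem_fz :: "('m \<Rightarrow> 'g \<Rightarrow> 'm \<Rightarrow> 'm fuzzy) \<Rightarrow> 'm \<Rightarrow> 'g \<Rightarrow> 'm fuzzy \<Rightarrow> 'm fuzzy" where
  "elem_fz op a g \<mu> = (\<lambda>r. if \<mu> = (\<lambda>_. 0) then 0 else (SUP t. min (op a g t r) (\<mu> t)))"

definition fz_elem :: "('m \<Rightarrow> 'g \<Rightarrow> 'm \<Rightarrow> 'm fuzzy) \<Rightarrow> 'm fuzzy \<Rightarrow> 'g \<Rightarrow> 'm \<Rightarrow> 'm fuzzy" where
  "fz_elem op \<mu> g a = (\<lambda>r. if \<mu> = (\<lambda>_. 0) then 0 else (SUP t. min (\<mu> t) (op t g a r)))"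

definition fz_fz :: "('m \<Rightarrow> 'g \<Rightarrow> 'm \<Rightarrow> 'm fuzzy) \<Rightarrow> 'm fuzzy \<Rightarrow> 'g \<Rightarrow> 'm fuzzy \<Rightarrow> 'm fuzzy" where
  "fz_fz op \<mu> g \<nu> = (\<lambda>t. (SUP pq. min (\<mu> (fst pq)) (min (op (fst pq) g (snd pq) t) (\<nu> (snd pq)))))"

definition fuzzy_gamma_hypersemigroup :: "('m \<Rightarrow> 'g \<Rightarrow> 'm \<Rightarrow> 'm fuzzy) \<Rightarrow> bool" where
  "fuzzy_gamma_hypersemigroup op \<longleftrightarrow> fuzzy_hyperop op \<and>
     (\<forall>a b c \<alpha> \<beta>. fz_elem op (op a \<alpha> b) \<beta> c = elem_fz op a \<alpha> (op b \<beta> c))"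

definition fz_subset :: "'m fuzzy \<Rightarrow> 'm fuzzy \<Rightarrow> bool" where
  "fz_subset \<mu> \<nu> \<longleftrightarrow> (\<forall>x. \<mu> x \<le> \<nu> x)"

definition fz_inter :: "'m fuzzy \<Rightarrow> 'm fuzzy \<Rightarrow> 'm fuzzy" where
  "fz_inter \<mu> \<nu> = (\<lambda>x. min (\<mu> x) (\<nu> x))"

definition fuzzy_sub_hypersemigroup :: "('m \<Rightarrow> 'g \<Rightarrow> 'm \<Rightarrow> 'm fuzzy) \<Rightarrow> 'm fuzzy \<Rightarrow> bool" where
  "fuzzy_sub_hypersemigroup op \<mu> \<longleftrightarrow> fuzzy_set \<mu> \<and> (\<forall>g. fz_subset (fz_fz op \<mu> g \<mu>) \<mu>)"

definition fuzzy_hyper_bi_ideal :: "('m \<Rightarrow> 'g \<Rightarrow> 'm \<Rightarrow> 'm fuzzy) \<Rightarrow> 'm fuzzy \<Rightarrow> bool" where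
  "fuzzy_hyper_bi_ideal op \<mu> \<longleftrightarrow> fuzzy_sub_hypersemigroup op \<mu> \<and>
     (\<forall>y \<alpha> \<beta>. fz_subset (fz_fz op (fz_elem op \<mu> \<alpha> y) \<beta> \<mu>) \<mu>)"

end

theory Submission
  imports Defs
begin

text \<open>Both defining conditions of a bi-ideal have the form \<open>F \<mu> \<subseteq> \<mu>\<close> with \<open>F\<close> monotone, so
  \<open>F (\<mu> \<inter> \<nu>) \<subseteq> F \<mu> \<inter> F \<nu> \<subseteq> \<mu> \<inter> \<nu>\<close>.\<close>

lemma fz_subset_trans: "fz_subset \<rho> \<mu> \<Longrightarrow> fz_subset \<mu> \<nu> \<Longrightarrow> fz_subset \<rho> \<nu>"
  unfolding fz_subset_def by (meson order_trans)

lemma fz_inter_subset1: "fz_subset (fz_inter \<mu> \<nu>) \<mu>"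
  by (simp add: fz_subset_def fz_inter_def)

lemma fz_inter_subset2: "fz_subset (fz_inter \<mu> \<nu>) \<nu>"
  by (simp add: fz_subset_def fz_inter_def)

lemma fz_inter_greatest: "fz_subset \<rho> \<mu> \<Longrightarrow> fz_subset \<rho> \<nu> \<Longrightarrow> fz_subset \<rho> (fz_inter \<mu> \<nu>)"
  by (simp add: fz_subset_def fz_inter_def)

lemma fuzzy_set_fz_inter: "fuzzy_set \<mu> \<Longrightarrow> fuzzy_set \<nu> \<Longrightarrow> fuzzy_set (fz_inter \<mu> \<nu>)"
  by (auto simp: fuzzy_set_def fz_inter_def min_le_iff_disj)

lemma fz_subset_fz_inter_closed:
  assumes "fz_subset \<rho> (F \<mu>)" and "fz_subset (F \<mu>) \<mu>"
    and "fz_subset \<rho> (F \<nu>)" and "fz_subset (F \<nu>) \<nu>"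
  shows "fz_subset \<rho> (fz_inter \<mu> \<nu>)"
  using assms by (blast intro: fz_inter_greatest fz_subset_trans)

lemma bdd_above_min_hyperop:
  assumes "fuzzy_hyperop op"
  shows "bdd_above (range (\<lambda>x. min (f x) (op (a x) g (b x) r)))"
  using assms unfolding fuzzy_hyperop_def fuzzy_set_def
  by (intro bdd_aboveI[where M=1]) (auto simp: min_le_iff_disj)

lemma fz_fz_mono:
  assumes "fuzzy_hyperop op" and "fz_subset \<mu>1 \<mu>2" and "fz_subset \<nu>1 \<nu>2"
  shows "fz_subset (fz_fz op \<mu>1 g \<nu>1) (fz_fz op \<mu>2 g \<nu>2)"
  unfolding fz_subset_def fz_fz_def
proof (intro allI cSUP_mono)
  fix t
  show "bdd_above (range (\<lambda>pq. min (\<mu>2 (fst pq)) (min (op (fst pq) g (snd pq) t) (\<nu>2 (snd pq)))))"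
    using bdd_above_min_hyperop[OF assms(1), of "\<lambda>pq. min (\<mu>2 (fst pq)) (\<nu>2 (snd pq))" fst g snd t]
    by (simp add: ac_simps)
  fix pq :: "'a \<times> 'a"
  show "\<exists>pq'\<in>UNIV. min (\<mu>1 (fst pq)) (min (op (fst pq) g (snd pq) t) (\<nu>1 (snd pq)))
        \<le> min (\<mu>2 (fst pq')) (min (op (fst pq') g (snd pq') t) (\<nu>2 (snd pq')))"
    using assms(2,3) unfolding fz_subset_def by (intro bexI[of _ pq] min.mono order.refl) auto
qed simp

text \<open>\<open>fz_elem\<close> is \<open>0\<close> on the zero fuzzy set instead of a supremum, so nonnegativity is needed:
  of \<open>\<mu>1\<close> to get \<open>\<mu>2 \<noteq> 0\<close> from \<open>\<mu>1 \<noteq> 0\<close>, and of \<open>\<mu>2\<close> to make its supremum nonnegative.\<close>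
lemma fz_elem_mono:
  assumes op: "fuzzy_hyperop op" and "fuzzy_set \<mu>1" and "fuzzy_set \<mu>2" and sub: "fz_subset \<mu>1 \<mu>2"
  shows "fz_subset (fz_elem op \<mu>1 g a) (fz_elem op \<mu>2 g a)"
  unfolding fz_subset_def
proof
  fix r
  have bdd: "bdd_above (range (\<lambda>t. min (\<mu>2 t) (op t g a r)))"
    using bdd_above_min_hyperop[OF op, of \<mu>2 id g "\<lambda>_. a" r] by simp
  have "0 \<le> min (\<mu>2 undefined) (op undefined g a r)"
    using op assms(3) unfolding fuzzy_hyperop_def fuzzy_set_def by auto
  also have "\<dots> \<le> (SUP t. min (\<mu>2 t) (op t g a r))"
    by (rule cSUP_upper[OF _ bdd]) simp
  finally have sup_nonneg: "0 \<le> (SUP t. min (\<mu>2 t) (op t g a r))" .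
  show "fz_elem op \<mu>1 g a r \<le> fz_elem op \<mu>2 g a r"
  proof (cases "\<mu>1 = (\<lambda>_. 0)")
    case True
    then show ?thesis using sup_nonneg by (simp add: fz_elem_def)
  next
    case False
    then obtain x where "\<mu>1 x \<noteq> 0" by auto
    with assms(2) sub have "\<mu>2 x \<noteq> 0"
      unfolding fuzzy_set_def fz_subset_def by (metis order.antisym)
    then have "\<mu>2 \<noteq> (\<lambda>_. 0)" by auto
    moreover have "(SUP t. min (\<mu>1 t) (op t g a r)) \<le> (SUP t. min (\<mu>2 t) (op t g a r))"
    proof (rule cSUP_mono[OF _ bdd])
      fix t
      show "\<exists>t'\<in>UNIV. min (\<mu>1 t) (op t g a r) \<le> min (\<mu>2 t') (op t' g a r)"
        using sub unfolding fz_subset_def by (intro bexI[of _ t] min.mono order.refl) auto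
    qed simp
    ultimately show ?thesis using False by (simp add: fz_elem_def)
  qed
qed

lemma fuzzy_hyper_bi_ideal_fz_inter:
  assumes op: "fuzzy_hyperop op"
    and \<mu>: "fuzzy_hyper_bi_ideal op \<mu>" and \<nu>: "fuzzy_hyper_bi_ideal op \<nu>"
  shows "fuzzy_hyper_bi_ideal op (fz_inter \<mu> \<nu>)"
proof -
  let ?\<iota> = "fz_inter \<mu> \<nu>"
  have f\<mu>: "fuzzy_set \<mu>" and f\<nu>: "fuzzy_set \<nu>"
    using \<mu> \<nu> by (auto simp: fuzzy_hyper_bi_ideal_def fuzzy_sub_hypersemigroup_def)
  have f\<iota>: "fuzzy_set ?\<iota>"
    using f\<mu> f\<nu> by (rule fuzzy_set_fz_inter)
  have sub: "fz_subset (fz_fz op ?\<iota> g ?\<iota>) ?\<iota>" for g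
  proof (rule fz_subset_fz_inter_closed[where F = "\<lambda>\<rho>. fz_fz op \<rho> g \<rho>"])
    show "fz_subset (fz_fz op ?\<iota> g ?\<iota>) (fz_fz op \<mu> g \<mu>)"
      "fz_subset (fz_fz op ?\<iota> g ?\<iota>) (fz_fz op \<nu> g \<nu>)"
      using fz_fz_mono[OF op] fz_inter_subset1 fz_inter_subset2 by blast+
    show "fz_subset (fz_fz op \<mu> g \<mu>) \<mu>" "fz_subset (fz_fz op \<nu> g \<nu>) \<nu>"
      using \<mu> \<nu> by (auto simp: fuzzy_hyper_bi_ideal_def fuzzy_sub_hypersemigroup_def)
  qed
  have bi: "fz_subset (fz_fz op (fz_elem op ?\<iota> \<alpha> y) \<beta> ?\<iota>) ?\<iota>" for y \<alpha> \<beta>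
  proof (rule fz_subset_fz_inter_closed[where F = "\<lambda>\<rho>. fz_fz op (fz_elem op \<rho> \<alpha> y) \<beta> \<rho>"])
    show "fz_subset (fz_fz op (fz_elem op ?\<iota> \<alpha> y) \<beta> ?\<iota>) (fz_fz op (fz_elem op \<mu> \<alpha> y) \<beta> \<mu>)"
      "fz_subset (fz_fz op (fz_elem op ?\<iota> \<alpha> y) \<beta> ?\<iota>) (fz_fz op (fz_elem op \<nu> \<alpha> y) \<beta> \<nu>)"
      using fz_fz_mono[OF op fz_elem_mono[OF op f\<iota> f\<mu> fz_inter_subset1] fz_inter_subset1]
        fz_fz_mono[OF op fz_elem_mono[OF op f\<iota> f\<nu> fz_inter_subset2] fz_inter_subset2] .
    show "fz_subset (fz_fz op (fz_elem op \<mu> \<alpha> y) \<beta> \<mu>) \<mu>"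
      "fz_subset (fz_fz op (fz_elem op \<nu> \<alpha> y) \<beta> \<nu>) \<nu>"
      using \<mu> \<nu> by (auto simp: fuzzy_hyper_bi_ideal_def)
  qed
  show ?thesis
    using f\<iota> sub bi by (simp add: fuzzy_hyper_bi_ideal_def fuzzy_sub_hypersemigroup_def)
qed

theorem theorem4p13:
  fixes op :: "'m \<Rightarrow> 'g \<Rightarrow> 'm \<Rightarrow> 'm fuzzy" and \<mu> \<nu> :: "'m fuzzy"
  assumes "fuzzy_gamma_hypersemigroup op"
    and "fuzzy_hyper_bi_ideal op \<mu>"
    and "fuzzy_hyper_bi_ideal op \<nu>"
  shows "fuzzy_hyper_bi_ideal op (fz_inter \<mu> \<nu>)"
  using assms(1) fuzzy_hyper_bi_ideal_fz_inter[OF _ assms(2,3)]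
  by (simp add: fuzzy_gamma_hypersemigroup_def)

end
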